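(* Consider the sequentially observed MDP described in the context, and let $V^*_{t+1}\in\mathbb{R}^n$ be defined by the recursion in the context. Fix an epoch $t\in\{1,\dots,N-1\}$ and a state $i$. Let $H_i\in\mathbb{R}^{n\times m}$ have entries $H_i(j,k)=\big(r_t(i,a_k)+V^*_{t+1}(j)\big)G_i(j,k)$, and let $X_i^*\in\mathbb{R}^{n\times m}$ be an optimal solution of the linear program $$\max_{X_i\in\mathbb{R}^{n\times m}}\ \sum_{k=1}^m\sum_{j=1}^nH_i(j,k)X_i(j,k)$$ subject to, for $j=1,\dots,n$ and $k=1,\dots,m-1$, $0\le X_i(j,k)\le 1-\sum_{l=1}^{k-1}\sum_{s=1}^nG_i(s,l)X_i(s,l)$, and, for $j=1,\dots,n$, $X_i(j,m)=1-\sum_{l=1}^{m-1}\sum_{s=1}^nG_i(s,l)X_i(s,l)$. Let $z(1)=1$ and $z(k)=1-\sum_{l=1}^{k-1}\sum_{s=1}^nG_i(s,l)X_i^*(s,l)$ for $k=2,\dots,m$. Then $$V^*_t(i)=\mathrm{Tr}(H_i^TX_i^* ),$$ and the matrix $P^*_i(t)$ with entries $P^*_i(j,k,t)=X_i^*(j,k)/z(k)$ if $z(k)>0$ and $P^*_i(j,k,t)=1$ otherwise ($j=1,\dots,n$, $k=1,\dots,m$) attains the maximum defining $V^*_t(i)$, i.e. is an optimal decision at state $i$ and epoch $t$.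
   Context: States $S=\{1,\dots,n\}$; at every state the actions are $a_1,\dots,a_m$ (in this fixed order); decision epochs $t=1,\dots,N-1$, $N\ge 2$. For each epoch $t$, state $i$, action index $k$, $G_i(j,k)=G_i(j,k,t)\ge 0$ with $\sum_jG_i(j,k)=1$ is the probability that action $a_k$ in state $i$ leads to state $j$. Rewards $r_t(i,a_k)\in\mathbb{R}$ for $t\le N-1$ and terminal rewards $r_N(i)$, with vector $\mathbf{r}_N$. Model: at each epoch, in state $i$, for phases $k=1,\dots,m-1$ the agent observes the realized transition of action $a_k$ and accepts it (taking $a_k$) or rejects it; if $a_1,\dots,a_{m-1}$ are all rejected, $a_m$ is taken. Decision variables at epoch $t$: matrices $P_i(t)\in[0,1]^{n\times m}$ with entries $P_i(j,k)=P_i(j,k,t)$ (probability of accepting an observed transition to $j$ in state $i$, phase $k$), with $P_i(j,m)=1$ for all $j$; $\mathcal{C}$ is the set of all such matrices. Define $q_i(a_k)=\sum_jG_i(j,k)P_i(j,k)$; $p_i(a_k)=\big(\prod_{l=1}^{k-1}(1-q_i(a_l))\big)q_i(a_k)$ (empty product $=1$); $r_t(i)=\sum_{k=1}^mp_i(a_k)r_t(i,a_k)$; $M_t(j,i)=\sum_{k=1}^m\big(\prod_{l=1}^{k-1}(1-q_i(a_l))\big)G_i(j,k)P_i(j,k)$. The optimal values are defined recursively by $V^*_N(i)=r_N(i)$ and, for $t=N-1,\dots,1$, $V^*_t(i)=\max_{P_i(t)\in\mathcal{C}}\big\{r_t(i)+\sum_{j=1}^nM_t(j,i)V^*_{t+1}(j)\big\}$.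 *)

theory Defs
  imports Complex_Main
begin

text \<open>States are 1..n, action indices 1..m, epochs 1..N-1.
  G t i j k = G_i(j,k,t): probability that action a_k in state i at epoch t leads to j.
  r t i k = r_t(i,a_k); rN i = r_N(i).
  A decision matrix for a fixed state/epoch is a function P :: nat => nat => real,
  P j k = P_i(j,k); only entries with j in 1..n, k in 1..m are relevant.
  Below, Gi stands for the function (j k. G_i(j,k,t)) at fixed t, i, and
  ri for (k. r_t(i,a_k)).\<close>

definition qv :: "nat \<Rightarrow> (nat \<Rightarrow> nat \<Rightarrow> real) \<Rightarrow> (nat \<Rightarrow> nat \<Rightarrow> real) \<Rightarrow> nat \<Rightarrow> real" where
  "qv n Gi P k = (\<Sum>j=1..n. Gi j k * P j k)"

definition surv :: "nat \<Rightarrow> (nat \<Rightarrow> nat \<Rightarrow> real) \<Rightarrow> (nat \<Rightarrow> nat \<Rightarrow> real) \<Rightarrow> nat \<Rightarrow> real" where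
  "surv n Gi P k = (\<Prod>l\<in>{1..<k}. 1 - qv n Gi P l)"

definition pact :: "nat \<Rightarrow> (nat \<Rightarrow> nat \<Rightarrow> real) \<Rightarrow> (nat \<Rightarrow> nat \<Rightarrow> real) \<Rightarrow> nat \<Rightarrow> real" where
  "pact n Gi P k = surv n Gi P k * qv n Gi P k"

definition rew :: "nat \<Rightarrow> nat \<Rightarrow> (nat \<Rightarrow> nat \<Rightarrow> real) \<Rightarrow> (nat \<Rightarrow> real) \<Rightarrow> (nat \<Rightarrow> nat \<Rightarrow> real) \<Rightarrow> real" where
  "rew n m Gi ri P = (\<Sum>k=1..m. pact n Gi P k * ri k)"

definition Mt :: "nat \<Rightarrow> nat \<Rightarrow> (nat \<Rightarrow> nat \<Rightarrow> real) \<Rightarrow> (nat \<Rightarrow> nat \<Rightarrow> real) \<Rightarrow> nat \<Rightarrow> real" where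
  "Mt n m Gi P j = (\<Sum>k=1..m. surv n Gi P k * Gi j k * P j k)"

definition adm :: "nat \<Rightarrow> nat \<Rightarrow> (nat \<Rightarrow> nat \<Rightarrow> real) \<Rightarrow> bool" where
  "adm n m P \<longleftrightarrow> (\<forall>j\<in>{1..n}. \<forall>k\<in>{1..m}. 0 \<le> P j k \<and> P j k \<le> 1) \<and> (\<forall>j\<in>{1..n}. P j m = 1)"

definition objv :: "nat \<Rightarrow> nat \<Rightarrow> (nat \<Rightarrow> nat \<Rightarrow> real) \<Rightarrow> (nat \<Rightarrow> real) \<Rightarrow> (nat \<Rightarrow> real) \<Rightarrow> (nat \<Rightarrow> nat \<Rightarrow> real) \<Rightarrow> real" where
  "objv n m Gi ri V P = rew n m Gi ri P + (\<Sum>j=1..n. Mt n m Gi P j * V j)"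

text \<open>Backward recursion: Vback ... k = V^*_{N-k}. The maximum over C is written as a supremum
  (the maximum is attained, so both coincide).\<close>
primrec Vback :: "nat \<Rightarrow> nat \<Rightarrow> nat \<Rightarrow> (nat \<Rightarrow> nat \<Rightarrow> nat \<Rightarrow> nat \<Rightarrow> real) \<Rightarrow> (nat \<Rightarrow> nat \<Rightarrow> nat \<Rightarrow> real)
    \<Rightarrow> (nat \<Rightarrow> real) \<Rightarrow> nat \<Rightarrow> nat \<Rightarrow> real" where
  "Vback n m N G r rN 0 = rN"
| "Vback n m N G r rN (Suc k) = (\<lambda>i. SUP P\<in>{P. adm n m P}.
      objv n m (G (N - Suc k) i) (r (N - Suc k) i) (Vback n m N G r rN k) P)"

definition Vstar :: "nat \<Rightarrow> nat \<Rightarrow> nat \<Rightarrow> (nat \<Rightarrow> nat \<Rightarrow> nat \<Rightarrow> nat \<Rightarrow> real) \<Rightarrow> (nat \<Rightarrow> nat \<Rightarrow> nat \<Rightarrow> real)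
    \<Rightarrow> (nat \<Rightarrow> real) \<Rightarrow> nat \<Rightarrow> nat \<Rightarrow> real" where
  "Vstar n m N G r rN t = Vback n m N G r rN (N - t)"

definition lp_used :: "nat \<Rightarrow> (nat \<Rightarrow> nat \<Rightarrow> real) \<Rightarrow> (nat \<Rightarrow> nat \<Rightarrow> real) \<Rightarrow> nat \<Rightarrow> real" where
  "lp_used n Gi X k = (\<Sum>l\<in>{1..<k}. \<Sum>s=1..n. Gi s l * X s l)"

definition lp_feasible :: "nat \<Rightarrow> nat \<Rightarrow> (nat \<Rightarrow> nat \<Rightarrow> real) \<Rightarrow> (nat \<Rightarrow> nat \<Rightarrow> real) \<Rightarrow> bool" where
  "lp_feasible n m Gi X \<longleftrightarrow>
     (\<forall>j\<in>{1..n}. \<forall>k\<in>{1..m-1}. 0 \<le> X j k \<and> X j k \<le> 1 - lp_used n Gi X k) \<and>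
     (\<forall>j\<in>{1..n}. X j m = 1 - lp_used n Gi X m)"

definition lp_obj :: "nat \<Rightarrow> nat \<Rightarrow> (nat \<Rightarrow> nat \<Rightarrow> real) \<Rightarrow> (nat \<Rightarrow> nat \<Rightarrow> real) \<Rightarrow> real" where
  "lp_obj n m H X = (\<Sum>k=1..m. \<Sum>j=1..n. H j k * X j k)"

definition lp_optimal :: "nat \<Rightarrow> nat \<Rightarrow> (nat \<Rightarrow> nat \<Rightarrow> real) \<Rightarrow> (nat \<Rightarrow> nat \<Rightarrow> real) \<Rightarrow> (nat \<Rightarrow> nat \<Rightarrow> real) \<Rightarrow> bool" where
  "lp_optimal n m Gi H X \<longleftrightarrow> lp_feasible n m Gi X \<and>
     (\<forall>Y. lp_feasible n m Gi Y \<longrightarrow> lp_obj n m H Y \<le> lp_obj n m H X)"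

definition zc :: "nat \<Rightarrow> (nat \<Rightarrow> nat \<Rightarrow> real) \<Rightarrow> (nat \<Rightarrow> nat \<Rightarrow> real) \<Rightarrow> nat \<Rightarrow> real" where
  "zc n Gi X k = (if k = 1 then 1 else 1 - lp_used n Gi X k)"

definition Pstar :: "nat \<Rightarrow> (nat \<Rightarrow> nat \<Rightarrow> real) \<Rightarrow> (nat \<Rightarrow> nat \<Rightarrow> real) \<Rightarrow> nat \<Rightarrow> nat \<Rightarrow> real" where
  "Pstar n Gi X j k = (if zc n Gi X k > 0 then X j k / zc n Gi X k else 1)"

end

theory Submission
  imports Defs
begin

text \<open>The change of variables \<open>Y(j,k) = (\<Prod>l<k. 1 - q(a\<^sub>l)) P(j,k)\<close> sends every decision matrix
  to a feasible point of the linear program with the same objective: the budget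
  \<open>1 - \<Sum>l<k. \<Sum>s. G(s,l) Y(s,l)\<close> telescopes to the probability of reaching phase \<open>k\<close>.
  On feasible points, division by that budget \<open>z(k)\<close> inverts the substitution, so the
  LP optimum is attained by \<open>P\<^sup>*\<close> and equals the Bellman maximum \<open>V\<^sup>*\<^sub>t(i)\<close>.\<close>

definition decision_to_lp :: "nat \<Rightarrow> (nat \<Rightarrow> nat \<Rightarrow> real) \<Rightarrow> (nat \<Rightarrow> nat \<Rightarrow> real) \<Rightarrow> nat \<Rightarrow> nat \<Rightarrow> real" where
  "decision_to_lp n Gi P j k = surv n Gi P k * P j k"

lemma surv_Suc: "k \<ge> 1 \<Longrightarrow> surv n Gi P (Suc k) = surv n Gi P k * (1 - qv n Gi P k)"
  by (simp add: surv_def atLeastLessThanSuc mult.commute)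

lemma lp_used_Suc:
  "k \<ge> 1 \<Longrightarrow> lp_used n Gi X (Suc k) = lp_used n Gi X k + (\<Sum>s=1..n. Gi s k * X s k)"
  by (simp add: lp_used_def atLeastLessThanSuc)

lemma zc_eq: "zc n Gi X k = 1 - lp_used n Gi X k"
  by (simp add: zc_def lp_used_def)

lemma lp_used_decision_to_lp:
  "k \<ge> 1 \<Longrightarrow> lp_used n Gi (decision_to_lp n Gi P) k = 1 - surv n Gi P k"
proof (induction k rule: nat_induct_at_least)
  case base
  then show ?case by (simp add: lp_used_def surv_def)
next
  case (Suc k)
  have "(\<Sum>s=1..n. Gi s k * decision_to_lp n Gi P s k) = surv n Gi P k * qv n Gi P k"
    by (simp add: qv_def decision_to_lp_def sum_distrib_left algebra_simps)
  then show ?case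
    using Suc by (simp add: lp_used_Suc surv_Suc algebra_simps)
qed

lemma objv_eq_lp_obj:
  "objv n m Gi ri V P = lp_obj n m (\<lambda>j k. (ri k + V j) * Gi j k) (decision_to_lp n Gi P)"
proof -
  let ?y = "\<lambda>j k. surv n Gi P k * Gi j k * P j k"
  have "objv n m Gi ri V P = (\<Sum>k=1..m. \<Sum>j=1..n. ?y j k * ri k) + (\<Sum>j=1..n. \<Sum>k=1..m. ?y j k * V j)"
    unfolding objv_def rew_def Mt_def pact_def qv_def
    by (simp add: sum_distrib_left sum_distrib_right mult.assoc)
  also have "(\<Sum>j=1..n. \<Sum>k=1..m. ?y j k * V j) = (\<Sum>k=1..m. \<Sum>j=1..n. ?y j k * V j)"
    by (rule sum.swap)
  finally show ?thesis
    unfolding lp_obj_def decision_to_lp_def sum.distrib[symmetric]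
    by (simp add: algebra_simps)
qed

locale column_stochastic =
  fixes n m :: nat and Gi :: "nat \<Rightarrow> nat \<Rightarrow> real"
  assumes nonneg: "j \<in> {1..n} \<Longrightarrow> k \<in> {1..m} \<Longrightarrow> 0 \<le> Gi j k"
    and sum_eq_1: "k \<in> {1..m} \<Longrightarrow> (\<Sum>j=1..n. Gi j k) = 1"
begin

lemma weighted_sum_le:
  assumes k: "k \<in> {1..m}" and le: "\<And>j. j \<in> {1..n} \<Longrightarrow> Y j k \<le> c"
  shows "(\<Sum>j=1..n. Gi j k * Y j k) \<le> c"
proof -
  have "(\<Sum>j=1..n. Gi j k * Y j k) \<le> (\<Sum>j=1..n. Gi j k * c)"
    by (rule sum_mono) (use k le nonneg in \<open>simp add: mult_left_mono\<close>)
  also have "\<dots> = c"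
    using sum_eq_1[OF k] by (simp add: sum_distrib_right[symmetric])
  finally show ?thesis .
qed

lemma surv_nonneg:
  assumes P: "adm n m P" and k: "k \<le> m"
  shows "0 \<le> surv n Gi P k"
  unfolding surv_def
proof (rule prod_nonneg)
  fix l assume "l \<in> {1..<k}"
  with k have l: "l \<in> {1..m}" by auto
  have "qv n Gi P l \<le> 1"
    unfolding qv_def by (rule weighted_sum_le[OF l]) (use P l in \<open>simp add: adm_def\<close>)
  then show "0 \<le> 1 - qv n Gi P l" by simp
qed

lemma lp_feasible_decision_to_lp:
  assumes P: "adm n m P" and m: "m \<ge> 1"
  shows "lp_feasible n m Gi (decision_to_lp n Gi P)"
  unfolding lp_feasible_def
proof (intro conjI ballI)
  fix j k assume j: "j \<in> {1..n}" and k: "k \<in> {1..m-1}"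
  have "0 \<le> surv n Gi P k" "0 \<le> P j k" "P j k \<le> 1"
    using surv_nonneg[OF P] P j k by (auto simp: adm_def)
  then show "0 \<le> decision_to_lp n Gi P j k"
    and "decision_to_lp n Gi P j k \<le> 1 - lp_used n Gi (decision_to_lp n Gi P) k"
    using k by (simp_all add: decision_to_lp_def lp_used_decision_to_lp mult_left_le)
next
  fix j assume "j \<in> {1..n}"
  then show "decision_to_lp n Gi P j m = 1 - lp_used n Gi (decision_to_lp n Gi P) m"
    using P m by (simp add: adm_def decision_to_lp_def lp_used_decision_to_lp)
qed

context
  fixes X :: "nat \<Rightarrow> nat \<Rightarrow> real"
  assumes X: "lp_feasible n m Gi X"
begin

lemma zc_nonneg: "k \<in> {1..m} \<Longrightarrow> 0 \<le> zc n Gi X k"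
proof (induction k)
  case (Suc k)
  show ?case
  proof (cases "k = 0")
    case False
    then have k: "k \<in> {1..m}" "k \<in> {1..m-1}" using Suc.prems by auto
    have "(\<Sum>s=1..n. Gi s k * X s k) \<le> zc n Gi X k"
      by (rule weighted_sum_le[OF k(1)]) (use k(2) X in \<open>auto simp: lp_feasible_def zc_eq\<close>)
    then show ?thesis
      using k by (simp add: zc_eq lp_used_Suc)
  qed (simp add: zc_def)
qed simp

lemma lp_feasible_bounds:
  assumes j: "j \<in> {1..n}" and k: "k \<in> {1..m}"
  shows "0 \<le> X j k \<and> X j k \<le> zc n Gi X k"
proof (cases "k = m")
  case True
  then show ?thesis
    using X j zc_nonneg[OF k] by (simp add: lp_feasible_def zc_eq)
next
  case False
  with k have "k \<in> {1..m-1}" by auto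
  then show ?thesis
    using X j by (simp add: lp_feasible_def zc_eq)
qed

lemma eq_0_if_zc_eq_0: "k \<in> {1..m} \<Longrightarrow> j \<in> {1..n} \<Longrightarrow> zc n Gi X k = 0 \<Longrightarrow> X j k = 0"
  using lp_feasible_bounds by fastforce

lemma surv_Pstar: "k \<in> {1..m} \<Longrightarrow> surv n Gi (Pstar n Gi X) k = zc n Gi X k"
proof (induction k)
  case (Suc k)
  show ?case
  proof (cases "k = 0")
    case True
    then show ?thesis by (simp add: zc_def surv_def)
  next
    case False
    then have k: "k \<in> {1..m}" using Suc.prems by simp
    have z_Suc: "zc n Gi X (Suc k) = zc n Gi X k - (\<Sum>s=1..n. Gi s k * X s k)"
      using k by (simp add: zc_eq lp_used_Suc)
    have "zc n Gi X k * qv n Gi (Pstar n Gi X) k = (\<Sum>s=1..n. Gi s k * X s k)"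
    proof (cases "zc n Gi X k > 0")
      case True
      then show ?thesis
        by (simp add: qv_def Pstar_def sum_distrib_left)
    next
      case False
      then have "zc n Gi X k = 0"
        using zc_nonneg[OF k] by simp
      then show ?thesis
        using eq_0_if_zc_eq_0[OF k] by simp
    qed
    then show ?thesis
      using Suc.IH k z_Suc by (simp add: surv_Suc algebra_simps)
  qed
qed simp

text \<open>Where \<open>z(k) = 0\<close> feasibility forces \<open>X(\<cdot>,k) = 0\<close>, so the value \<open>1\<close> that \<open>Pstar\<close>
  assigns there is harmless.\<close>

lemma decision_to_lp_Pstar:
  assumes j: "j \<in> {1..n}" and k: "k \<in> {1..m}"
  shows "decision_to_lp n Gi (Pstar n Gi X) j k = X j k"
  using zc_nonneg[OF k] eq_0_if_zc_eq_0[OF k j]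
  by (auto simp: decision_to_lp_def surv_Pstar[OF k] Pstar_def)

lemma adm_Pstar: "adm n m (Pstar n Gi X)"
  unfolding adm_def
proof (intro conjI ballI)
  fix j k assume j: "j \<in> {1..n}" and k: "k \<in> {1..m}"
  show "0 \<le> Pstar n Gi X j k" "Pstar n Gi X j k \<le> 1"
    using lp_feasible_bounds[OF j k] by (auto simp: Pstar_def)
next
  fix j assume "j \<in> {1..n}"
  then show "Pstar n Gi X j m = 1"
    using X by (simp add: lp_feasible_def zc_eq Pstar_def)
qed

end

lemma Pstar_optimal:
  assumes m: "m \<ge> 1" and opt: "lp_optimal n m Gi (\<lambda>j k. (ri k + V j) * Gi j k) X"
  shows "objv n m Gi ri V (Pstar n Gi X) = lp_obj n m (\<lambda>j k. (ri k + V j) * Gi j k) X"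
    and "adm n m P \<Longrightarrow> objv n m Gi ri V P \<le> objv n m Gi ri V (Pstar n Gi X)"
proof -
  have X: "lp_feasible n m Gi X"
    using opt by (simp add: lp_optimal_def)
  show eq: "objv n m Gi ri V (Pstar n Gi X) = lp_obj n m (\<lambda>j k. (ri k + V j) * Gi j k) X"
    unfolding objv_eq_lp_obj lp_obj_def by (simp add: decision_to_lp_Pstar[OF X])
  assume "adm n m P"
  then show "objv n m Gi ri V P \<le> objv n m Gi ri V (Pstar n Gi X)"
    unfolding eq unfolding objv_eq_lp_obj
    using opt lp_feasible_decision_to_lp[OF _ m] by (simp add: lp_optimal_def)
qed

end

lemma Vstar_Bellman:
  assumes "t \<in> {1..N-1}"
  shows "Vstar n m N G r rN t i
    = (SUP P\<in>{P. adm n m P}. objv n m (G t i) (r t i) (Vstar n m N G r rN (t + 1)) P)"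
proof -
  have "N - t = Suc (N - (t + 1))" "N - Suc (N - (t + 1)) = t"
    using assms by auto
  then show ?thesis
    by (simp add: Vstar_def)
qed

theorem proposition2:
  fixes n m N t i :: nat
    and G :: "nat \<Rightarrow> nat \<Rightarrow> nat \<Rightarrow> nat \<Rightarrow> real"
    and r :: "nat \<Rightarrow> nat \<Rightarrow> nat \<Rightarrow> real"
    and rN :: "nat \<Rightarrow> real"
    and X :: "nat \<Rightarrow> nat \<Rightarrow> real"
  assumes n: "n \<ge> 1" and m: "m \<ge> 1" and N: "N \<ge> 2"
    and G_nonneg: "\<And>t' i' j k. t' \<in> {1..N-1} \<Longrightarrow> i' \<in> {1..n} \<Longrightarrow> j \<in> {1..n} \<Longrightarrow> k \<in> {1..m}
                     \<Longrightarrow> 0 \<le> G t' i' j k"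
    and G_stoch: "\<And>t' i' k. t' \<in> {1..N-1} \<Longrightarrow> i' \<in> {1..n} \<Longrightarrow> k \<in> {1..m}
                     \<Longrightarrow> (\<Sum>j=1..n. G t' i' j k) = 1"
    and t: "t \<in> {1..N-1}" and i: "i \<in> {1..n}"
    and opt: "lp_optimal n m (G t i)
                (\<lambda>j k. (r t i k + Vstar n m N G r rN (t + 1) j) * G t i j k) X"
  shows "Vstar n m N G r rN t i
           = lp_obj n m (\<lambda>j k. (r t i k + Vstar n m N G r rN (t + 1) j) * G t i j k) X
       \<and> adm n m (Pstar n (G t i) X)
       \<and> objv n m (G t i) (r t i) (Vstar n m N G r rN (t + 1)) (Pstar n (G t i) X)
           = Vstar n m N G r rN t i
       \<and> (\<forall>P. adm n m P \<longrightarrow>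
            objv n m (G t i) (r t i) (Vstar n m N G r rN (t + 1)) P
              \<le> objv n m (G t i) (r t i) (Vstar n m N G r rN (t + 1)) (Pstar n (G t i) X))"
proof -
  interpret column_stochastic n m "G t i"
    by unfold_locales (use G_nonneg G_stoch t i in auto)
  let ?f = "objv n m (G t i) (r t i) (Vstar n m N G r rN (t + 1))"
  have adm: "adm n m (Pstar n (G t i) X)"
    using opt by (simp add: lp_optimal_def adm_Pstar)
  note attained = Pstar_optimal(1)[OF m opt] and best = Pstar_optimal(2)[OF m opt]
  have "Vstar n m N G r rN t i = ?f (Pstar n (G t i) X)"
    unfolding Vstar_Bellman[OF t]
    by (rule cSup_eq_maximum) (use adm best in auto)
  then show ?thesis
    using attained best adm by simp
qed

end
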